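(* In the setting below, assume $\|\nabla f_i(x)\|\le G_i$ for all $x$ and $i$, and $\psi$ satisfies the $\mu_\psi$-condition. Let $\gamma_k=\eta_k\prod_{\ell=2}^k(1+n\eta_{\ell-1}\mu_\psi)$ for $k\in[K]$. Then for any permutations $\sigma_1,\dots,\sigma_K$, $$F(x_{K+1})-F(x_* )\le\frac{\|x_*-x_1\|^2-\|x_*-x_{K+1}\|^2}{2n\sum_{k=1}^K\gamma_k}+3\bar G^2n\sum_{k=1}^K\frac{\gamma_k\eta_k}{\sum_{\ell=k}^K\gamma_\ell}.$$
   Context: Setting. Let $n,d\in\mathbb N$, let $f_1,\dots,f_n:\mathbb R^d\to\mathbb R$ be convex, $f=\frac1n\sum_{i=1}^nf_i$, let $\psi:\mathbb R^d\to\mathbb R\cup\{+\infty\}$ be proper, closed and convex, and $F=f+\psi$. For a convex function $g$, $\nabla g(x)$ denotes an element of $\partial g(x)$ (for each $f_i$ a fixed selection of subgradients, the same one used in the algorithm), and $B_g(x,y)=g(x)-g(y)-\langle\nabla g(y),x-y\rangle$. The $\mu_\psi$-condition: $\mu_\psi\ge0$ and $B_\psi(x,y)\ge\frac{\mu_\psi}{2}\|x-y\|^2$ for all $x,y$ with $\partial\psi(y)\neq\emptyset$ and every choice of $\nabla\psi(y)\in\partial\psi(y)$. Assume there is $x_*\in\mathbb R^d$ with $F(x_* )=\inf_{x}F(x)\in\mathbb R$. Proximal shuffling gradient method: given $x_1\in\mathrm{dom}\,\psi$, a number of epochs $K\ge2$ and stepsizes $\eta_k>0$, for $k=1,\dots,K$: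 choose a permutation $\sigma_k=(\sigma_k^1,\dots,\sigma_k^n)$ of $[n]=\{1,\dots,n\}$; set $x_k^1=x_k$ and $x_k^{i+1}=x_k^i-\eta_k\nabla f_{\sigma_k^i}(x_k^i)$ for $i=1,\dots,n$; set $x_{k+1}=\arg\min_{x\in\mathbb R^d}\{n\psi(x)+\frac{1}{2\eta_k}\|x-x_k^{n+1}\|^2\}$. Lipschitz condition: constants $G_i>0$ with $\|\nabla f_i(x)\|\le G_i$ for all $x\in\mathbb R^d$, $i\in[n]$ (for every subgradient); $\bar G=\frac1n\sum_{i=1}^nG_i$. *)

theory Defs
  imports "HOL-Analysis.Analysis"
begin

text \<open>Extended-valued convex functions are represented by a real-valued function
  together with its effective domain D (the function is +infinity outside D).\<close>

definition is_subgrad :: "'a set \<Rightarrow> ('a::real_inner \<Rightarrow> real) \<Rightarrow> 'a \<Rightarrow> 'a \<Rightarrow> bool" where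
  "is_subgrad D h y v \<longleftrightarrow> y \<in> D \<and> (\<forall>x\<in>D. h x \<ge> h y + inner v (x - y))"

definition proper_closed_convex :: "'a set \<Rightarrow> ('a::real_normed_vector \<Rightarrow> real) \<Rightarrow> bool" where
  "proper_closed_convex D h \<longleftrightarrow> D \<noteq> {} \<and> convex D \<and> convex_on D h \<and>
     closed {(x, t) | x t. x \<in> D \<and> h x \<le> t}"

definition bregman :: "('a::real_inner \<Rightarrow> real) \<Rightarrow> 'a \<Rightarrow> 'a \<Rightarrow> 'a \<Rightarrow> real" where
  "bregman h v x y = h x - h y - inner v (x - y)"

text \<open>mu-condition for psi (only x in dom psi matter: otherwise B = +infinity)\<close>
definition mu_condition :: "'a set \<Rightarrow> ('a::real_inner \<Rightarrow> real) \<Rightarrow> real \<Rightarrow> bool" where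
  "mu_condition D h \<mu> \<longleftrightarrow> \<mu> \<ge> 0 \<and>
     (\<forall>x\<in>D. \<forall>y v. is_subgrad D h y v \<longrightarrow> bregman h v x y \<ge> \<mu> / 2 * (norm (x - y))\<^sup>2)"

end

theory Submission
  imports Defs
begin

text \<open>One epoch moves from x k to x (k+1) like a single proximal subgradient step of length
  n \<eta> k on F, up to an error: the inner iterates stay within \<eta> k * (\<Sum>i. G i) of x k, so
  evaluating the subgradients there instead of at x (k+1) costs O((\<eta> k * \<Sum>i. G i)^2), while
  the optimality of the proximal step and the \<mu>-condition gain the factor 1 + n \<eta> k \<mu> on the
  new distance. Multiplied by the product of these factors, the distance terms of consecutive
  epochs telescope. Comparing with every earlier iterate, not only with the minimizer, and
  averaging these comparisons backwards from the last epoch with the weights \<gamma> k turns the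
  resulting average-iterate bound into a last-iterate bound.\<close>

lemma prox_minimizer_is_subgrad:
  fixes \<psi> :: "'a::real_inner \<Rightarrow> real"
  assumes N: "N > 0" and \<eta>: "\<eta> > 0" and "convex D" and "convex_on D \<psi>" and p: "p \<in> D"
    and min: "\<And>y. y \<in> D \<Longrightarrow> N * \<psi> p + (norm (p - c))\<^sup>2 / (2 * \<eta>) \<le> N * \<psi> y + (norm (y - c))\<^sup>2 / (2 * \<eta>)"
  shows "is_subgrad D \<psi> p ((1 / (N * \<eta>)) *\<^sub>R (c - p))"
  unfolding is_subgrad_def
proof (intro conjI ballI p)
  \<comment> \<open>compare p with the points of the segment towards y and let them tend to p\<close>
  fix y assume y: "y \<in> D"
  define A where "A = N * (\<psi> y - \<psi> p) + inner (p - c) (y - p) / \<eta>"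
  define B where "B = (norm (y - p))\<^sup>2 / (2 * \<eta>)"
  have "0 \<le> A + t * B" if t: "0 < t" "t < 1" for t
  proof -
    define z where "z = (1 - t) *\<^sub>R p + t *\<^sub>R y"
    have "z \<in> D" using \<open>convex D\<close> p y t unfolding z_def by (intro convexD) auto
    moreover have "\<psi> z \<le> (1 - t) * \<psi> p + t * \<psi> y"
      unfolding z_def using t p y by (intro convex_onD[OF \<open>convex_on D \<psi>\<close>]) auto
    moreover have "(norm (z - c))\<^sup>2 = (norm (p - c))\<^sup>2 + 2 * t * inner (p - c) (y - p) + t\<^sup>2 * (norm (y - p))\<^sup>2"
      unfolding z_def power2_norm_eq_inner
      by (simp add: algebra_simps inner_add_left inner_add_right inner_diff_left inner_diff_right
          inner_commute power2_eq_square)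
    ultimately have "N * \<psi> p + (norm (p - c))\<^sup>2 / (2 * \<eta>) \<le> N * ((1 - t) * \<psi> p + t * \<psi> y)
        + ((norm (p - c))\<^sup>2 + 2 * t * inner (p - c) (y - p) + t\<^sup>2 * (norm (y - p))\<^sup>2) / (2 * \<eta>)"
      using min[of z] N \<eta> by (smt (verit) divide_right_mono mult_left_mono)
    moreover have "N * ((1 - t) * \<psi> p + t * \<psi> y)
        + ((norm (p - c))\<^sup>2 + 2 * t * inner (p - c) (y - p) + t\<^sup>2 * (norm (y - p))\<^sup>2) / (2 * \<eta>)
        - (N * \<psi> p + (norm (p - c))\<^sup>2 / (2 * \<eta>)) = t * (A + t * B)"
      using \<eta> by (simp add: A_def B_def field_simps power2_eq_square)
    ultimately have "0 \<le> t * (A + t * B)" by linarith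
    then show ?thesis using t by (simp add: zero_le_mult_iff)
  qed
  then have "eventually (\<lambda>t. 0 \<le> A + t * B) (at_right 0)"
    using eventually_at_right_real[of 0 1] by (auto elim: eventually_mono)
  moreover have "((\<lambda>t. A + t * B) \<longlongrightarrow> A + 0 * B) (at_right 0)"
    by (intro tendsto_intros)
  ultimately have "0 \<le> A"
    using tendsto_lowerbound[of _ A "at_right (0::real)" 0] by simp
  moreover have "\<psi> y - \<psi> p - inner ((1 / (N * \<eta>)) *\<^sub>R (c - p)) (y - p) = A / N"
    using N \<eta> by (simp add: A_def field_simps inner_diff_left)
  ultimately show "\<psi> p + inner ((1 / (N * \<eta>)) *\<^sub>R (c - p)) (y - p) \<le> \<psi> y"
    using N by (smt (verit) divide_nonneg_pos)
qed

lemma prox_step_lower_bound: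
  fixes \<psi> :: "'a::real_inner \<Rightarrow> real"
  assumes N: "N > 0" and \<eta>: "\<eta> > 0" and "convex D" and "convex_on D \<psi>" and mu: "mu_condition D \<psi> \<mu>"
    and p: "p \<in> D" and y: "y \<in> D"
    and min: "\<And>y. y \<in> D \<Longrightarrow> N * \<psi> p + (norm (p - c))\<^sup>2 / (2 * \<eta>) \<le> N * \<psi> y + (norm (y - c))\<^sup>2 / (2 * \<eta>)"
  shows "inner (c - p) (y - p) + N * \<eta> * \<mu> / 2 * (norm (y - p))\<^sup>2 \<le> N * \<eta> * (\<psi> y - \<psi> p)"
proof -
  have "is_subgrad D \<psi> p ((1 / (N * \<eta>)) *\<^sub>R (c - p))"
    using prox_minimizer_is_subgrad assms by blast
  then have "\<mu> / 2 * (norm (y - p))\<^sup>2 \<le> \<psi> y - \<psi> p - inner ((1 / (N * \<eta>)) *\<^sub>R (c - p)) (y - p)"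
    using mu y unfolding mu_condition_def bregman_def by blast
  then have "N * \<eta> * (\<mu> / 2 * (norm (y - p))\<^sup>2)
      \<le> N * \<eta> * (\<psi> y - \<psi> p - inner ((1 / (N * \<eta>)) *\<^sub>R (c - p)) (y - p))"
    using N \<eta> by (intro mult_left_mono) auto
  then show ?thesis
    using N \<eta> by (simp add: algebra_simps)
qed

lemma sum_mult_partial_sums_le_square:
  fixes a :: "nat \<Rightarrow> real"
  shows "2 * (\<Sum>i=1..m. a i * (\<Sum>j=1..<i. a j)) \<le> (\<Sum>i=1..m. a i)\<^sup>2"
proof (induction m)
  case 0
  then show ?case by simp
next
  case (Suc m)
  have "2 * (\<Sum>i=1..Suc m. a i * (\<Sum>j=1..<i. a j))
      = 2 * (\<Sum>i=1..m. a i * (\<Sum>j=1..<i. a j)) + 2 * a (Suc m) * (\<Sum>j=1..m. a j)"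
    by (simp add: atLeastLessThanSuc_atLeastAtMost)
  also have "\<dots> \<le> (\<Sum>i=1..m. a i)\<^sup>2 + 2 * a (Suc m) * (\<Sum>j=1..m. a j) + (a (Suc m))\<^sup>2"
    using Suc.IH zero_le_power2[of "a (Suc m)"] by linarith
  also have "\<dots> = (\<Sum>i=1..Suc m. a i)\<^sup>2"
    by (simp add: power2_eq_square algebra_simps)
  finally show ?case .
qed

lemma incremental_subgradient_iterate:
  fixes z :: "nat \<Rightarrow> 'a::real_vector"
  assumes recur: "\<And>i. i \<in> {1..m} \<Longrightarrow> z (Suc i) = z i - \<eta> *\<^sub>R u i (z i)"
  shows "i \<in> {1..Suc m} \<Longrightarrow> z i = z 1 - \<eta> *\<^sub>R (\<Sum>j=1..<i. u j (z j))"
proof (induction i)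
  case 0
  then show ?case by simp
next
  case (Suc i)
  show ?case
  proof (cases "i = 0")
    case True
    then show ?thesis by simp
  next
    case False
    then have "z (Suc i) = z i - \<eta> *\<^sub>R u i (z i)"
      using recur Suc.prems by auto
    then show ?thesis
      using Suc False by (simp add: scaleR_right_distrib diff_diff_eq)
  qed
qed

lemma incremental_subgradient_pass:
  fixes h :: "nat \<Rightarrow> 'a::real_inner \<Rightarrow> real" and u :: "nat \<Rightarrow> 'a \<Rightarrow> 'a" and z :: "nat \<Rightarrow> 'a"
  assumes subgrad: "\<And>i q. i \<in> {1..m} \<Longrightarrow> is_subgrad UNIV (h i) q (u i q)"
    and bound: "\<And>i q. i \<in> {1..m} \<Longrightarrow> norm (u i q) \<le> L i"
    and \<eta>: "\<eta> \<ge> 0"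
    and step: "\<And>i. i \<in> {1..m} \<Longrightarrow> z (Suc i) = z i - \<eta> *\<^sub>R u i (z i)"
  shows "inner (z 1 - z (Suc m)) (y - p) - 2 * \<eta> * norm (p - z 1) * (\<Sum>i=1..m. L i)
           - \<eta>\<^sup>2 * (\<Sum>i=1..m. L i)\<^sup>2
         \<le> \<eta> * (\<Sum>i=1..m. h i y - h i p)"
proof -
  define r where "r = norm (p - z 1)"
  have L_nonneg: "0 \<le> L i" if "i \<in> {1..m}" for i
    using bound[OF that, of "z i"] norm_ge_zero[of "u i (z i)"] by linarith
  have drift: "norm (p - z i) \<le> r + \<eta> * (\<Sum>j=1..<i. L j)" if i: "i \<in> {1..m}" for i
  proof -
    have "norm (z i - z 1) = \<eta> * norm (\<Sum>j=1..<i. u j (z j))"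
      using incremental_subgradient_iterate[of m z \<eta> u, OF step, of i] i \<eta> by simp
    also have "\<dots> \<le> \<eta> * (\<Sum>j=1..<i. L j)"
      using \<eta> i by (intro mult_left_mono order_trans[OF norm_sum sum_mono] bound) auto
    finally show ?thesis
      using norm_triangle_ineq4[of "p - z 1" "z i - z 1"] by (simp add: r_def)
  qed
  have per_step: "inner (u i (z i)) (y - p) - 2 * L i * (r + \<eta> * (\<Sum>j=1..<i. L j)) \<le> h i y - h i p"
    if i: "i \<in> {1..m}" for i
  proof -
    have "h i (z i) + inner (u i (z i)) (y - z i) \<le> h i y"
      and "h i p + inner (u i p) (z i - p) \<le> h i (z i)"
      using subgrad[OF i] unfolding is_subgrad_def by auto
    moreover have "inner (u i (z i)) (y - z i) + inner (u i p) (z i - p)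
        = inner (u i (z i)) (y - p) + inner (u i (z i) - u i p) (p - z i)"
      by (simp add: inner_diff_left inner_diff_right)
    moreover have "\<bar>inner (u i (z i) - u i p) (p - z i)\<bar> \<le> 2 * L i * (r + \<eta> * (\<Sum>j=1..<i. L j))"
    proof -
      have "norm (u i (z i) - u i p) \<le> 2 * L i"
        using norm_triangle_ineq4[of "u i (z i)" "u i p"] bound[OF i, of "z i"] bound[OF i, of p] by linarith
      then have "norm (u i (z i) - u i p) * norm (p - z i) \<le> 2 * L i * (r + \<eta> * (\<Sum>j=1..<i. L j))"
        using drift[OF i] L_nonneg[OF i] by (intro mult_mono) auto
      then show ?thesis
        by (rule order_trans[OF Cauchy_Schwarz_ineq2])
    qed
    ultimately show ?thesis by linarith
  qed
  have "inner (\<Sum>i=1..m. u i (z i)) (y - p) - 2 * r * (\<Sum>i=1..m. L i) - \<eta> * (\<Sum>i=1..m. L i)\<^sup>2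
      \<le> inner (\<Sum>i=1..m. u i (z i)) (y - p) - 2 * r * (\<Sum>i=1..m. L i)
        - \<eta> * (2 * (\<Sum>i=1..m. L i * (\<Sum>j=1..<i. L j)))"
    using sum_mult_partial_sums_le_square[of L m] \<eta> by (simp add: mult_left_mono)
  also have "\<dots> = (\<Sum>i=1..m. inner (u i (z i)) (y - p) - 2 * L i * (r + \<eta> * (\<Sum>j=1..<i. L j)))"
    by (simp add: sum_subtractf sum.distrib inner_sum_left sum_distrib_left sum_distrib_right algebra_simps)
  also have "\<dots> \<le> (\<Sum>i=1..m. h i y - h i p)"
    by (intro sum_mono per_step)
  finally have "inner (\<Sum>i=1..m. u i (z i)) (y - p) - 2 * r * (\<Sum>i=1..m. L i) - \<eta> * (\<Sum>i=1..m. L i)\<^sup>2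
      \<le> (\<Sum>i=1..m. h i y - h i p)" .
  then have "\<eta> * (inner (\<Sum>i=1..m. u i (z i)) (y - p) - 2 * r * (\<Sum>i=1..m. L i) - \<eta> * (\<Sum>i=1..m. L i)\<^sup>2)
      \<le> \<eta> * (\<Sum>i=1..m. h i y - h i p)"
    using \<eta> by (rule mult_left_mono)
  moreover have "\<eta> * inner (\<Sum>i=1..m. u i (z i)) (y - p) = inner (z 1 - z (Suc m)) (y - p)"
    using incremental_subgradient_iterate[of m z \<eta> u, OF step, of "Suc m"]
    by (simp add: atLeastLessThanSuc_atLeastAtMost flip: inner_scaleR_left)
  ultimately show ?thesis
    by (simp add: r_def algebra_simps power2_eq_square)
qed

text \<open>Here \<Delta> j is the suboptimality of the j-th anchor and d j k the weighted distance of the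
  k-th iterate to it. The bound for start s is a convex combination, with weights \<gamma> s / S s and
  S (s+1) / S s, of the descent step s and the bounds for start s+1 with anchors j and s+1.\<close>

lemma weighted_last_iterate_bound:
  fixes \<gamma> \<Delta> C :: "nat \<Rightarrow> real" and d :: "nat \<Rightarrow> nat \<Rightarrow> real" and c :: real
  assumes \<gamma>_pos: "\<And>k. k \<in> {1..K} \<Longrightarrow> \<gamma> k > 0"
    and descent: "\<And>k j. k \<in> {1..K} \<Longrightarrow> j \<le> k \<Longrightarrow>
        c * \<gamma> k * (\<Delta> (Suc k) - \<Delta> j) \<le> d j k - d j (Suc k) + C k"
    and d_diag: "\<And>j. j \<in> {1..K} \<Longrightarrow> d j j = 0"
    and d_last: "\<And>j. j \<in> {1..K} \<Longrightarrow> d j (Suc K) \<ge> 0"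
    and s: "s \<in> {1..K}" and j: "j \<le> s"
  shows "c * (\<Delta> (Suc K) - \<Delta> j)
    \<le> (d j s - d j (Suc K)) / (\<Sum>l=s..K. \<gamma> l) + (\<Sum>k=s..K. C k / (\<Sum>l=k..K. \<gamma> l))"
proof -
  define S where "S k = (\<Sum>l=k..K. \<gamma> l)" for k
  define R where "R k = (\<Sum>k'=k..K. C k' / S k')" for k
  have S_pos: "S k > 0" if "k \<in> {1..K}" for k
    unfolding S_def using that \<gamma>_pos by (intro sum_pos) auto
  have s_le: "s \<le> K" using s by simp
  have "\<forall>j\<le>s. c * (\<Delta> (Suc K) - \<Delta> j) \<le> (d j s - d j (Suc K)) / S s + R s"
    using s_le
  proof (induction s rule: inc_induct)
    case base
    show ?case
    proof (intro allI impI)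
      fix j assume "j \<le> K"
      then have "c * \<gamma> K * (\<Delta> (Suc K) - \<Delta> j) \<le> d j K - d j (Suc K) + C K"
        using descent s by auto
      moreover have "S K = \<gamma> K" "R K = C K / \<gamma> K"
        by (simp_all add: S_def R_def)
      ultimately show "c * (\<Delta> (Suc K) - \<Delta> j) \<le> (d j K - d j (Suc K)) / S K + R K"
        using \<gamma>_pos[of K] s by (simp add: field_simps)
    qed
  next
    case (step n)
    have n: "n \<in> {1..K}" and Sn: "S n = \<gamma> n + S (Suc n)" and Rn: "R n = C n / S n + R (Suc n)"
      using step.hyps s by (auto simp: S_def R_def sum.atLeast_Suc_atMost)
    have S_Suc: "S (Suc n) > 0"
      using S_pos step.hyps s by auto
    show ?case
    proof (intro allI impI)
      fix j assume j: "j \<le> n"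
      have "c * (\<Delta> (Suc K) - \<Delta> j) \<le> (d j (Suc n) - d j (Suc K)) / S (Suc n) + R (Suc n)"
        using step.IH j by auto
      then have IH_j: "S (Suc n) * (c * (\<Delta> (Suc K) - \<Delta> j)) \<le> d j (Suc n) - d j (Suc K) + S (Suc n) * R (Suc n)"
        using S_Suc by (simp add: field_simps)
      have "c * (\<Delta> (Suc K) - \<Delta> (Suc n)) \<le> (- d (Suc n) (Suc K)) / S (Suc n) + R (Suc n)"
        using step.IH d_diag[of "Suc n"] step.hyps by auto
      moreover have "(- d (Suc n) (Suc K)) / S (Suc n) \<le> 0"
        using d_last[of "Suc n"] S_Suc step.hyps by (simp add: divide_nonpos_pos)
      ultimately have "\<gamma> n * (c * (\<Delta> (Suc K) - \<Delta> (Suc n))) \<le> \<gamma> n * R (Suc n)"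
        using \<gamma>_pos[OF n] by (intro mult_left_mono) auto
      moreover have "c * \<gamma> n * (\<Delta> (Suc n) - \<Delta> j) \<le> d j n - d j (Suc n) + C n"
        using descent[OF n j] .
      moreover have "S n * (c * (\<Delta> (Suc K) - \<Delta> j)) = \<gamma> n * (c * (\<Delta> (Suc K) - \<Delta> (Suc n)))
          + c * \<gamma> n * (\<Delta> (Suc n) - \<Delta> j) + S (Suc n) * (c * (\<Delta> (Suc K) - \<Delta> j))"
        unfolding Sn by (simp add: algebra_simps)
      ultimately have "S n * (c * (\<Delta> (Suc K) - \<Delta> j)) \<le> d j n - d j (Suc K) + C n + S n * R (Suc n)"
        using IH_j Sn by (simp add: algebra_simps)
      then have "c * (\<Delta> (Suc K) - \<Delta> j) \<le> (d j n - d j (Suc K) + C n + S n * R (Suc n)) / S n"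
        using S_pos[OF n] by (simp add: pos_le_divide_eq mult.commute)
      also have "\<dots> = (d j n - d j (Suc K)) / S n + R n"
        using S_pos[OF n] unfolding Rn by (simp add: field_simps)
      finally show "c * (\<Delta> (Suc K) - \<Delta> j) \<le> (d j n - d j (Suc K)) / S n + R n" .
    qed
  qed
  then show ?thesis
    using j by (simp add: S_def R_def)
qed

locale prox_shuffling =
  fixes n K :: nat
    and fs :: "nat \<Rightarrow> 'a::real_inner \<Rightarrow> real" and g :: "nat \<Rightarrow> 'a \<Rightarrow> 'a" and G :: "nat \<Rightarrow> real"
    and \<psi> :: "'a \<Rightarrow> real" and D :: "'a set" and \<mu> :: real
    and \<eta> :: "nat \<Rightarrow> real" and \<sigma> :: "nat \<Rightarrow> nat \<Rightarrow> nat"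
    and x :: "nat \<Rightarrow> 'a" and xi :: "nat \<Rightarrow> nat \<Rightarrow> 'a"
  assumes n_pos: "n \<ge> 1"
    and g_subgrad: "\<And>i y. i \<in> {1..n} \<Longrightarrow> is_subgrad UNIV (fs i) y (g i y)"
    and lipschitz: "\<And>i y v. i \<in> {1..n} \<Longrightarrow> is_subgrad UNIV (fs i) y v \<Longrightarrow> norm v \<le> G i"
    and psi_pcc: "proper_closed_convex D \<psi>"
    and psi_mu: "mu_condition D \<psi> \<mu>"
    and x1: "x 1 \<in> D"
    and eta_pos: "\<And>k. k \<in> {1..K} \<Longrightarrow> \<eta> k > 0"
    and perm: "\<And>k. k \<in> {1..K} \<Longrightarrow> \<sigma> k permutes {1..n}"
    and inner_start: "\<And>k. k \<in> {1..K} \<Longrightarrow> xi k 1 = x k"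
    and inner_step: "\<And>k i. k \<in> {1..K} \<Longrightarrow> i \<in> {1..n} \<Longrightarrow>
         xi k (Suc i) = xi k i - \<eta> k *\<^sub>R g (\<sigma> k i) (xi k i)"
    and prox: "\<And>k. k \<in> {1..K} \<Longrightarrow> x (Suc k) \<in> D \<and>
         (\<forall>y\<in>D. real n * \<psi> (x (Suc k)) + (norm (x (Suc k) - xi k (Suc n)))\<^sup>2 / (2 * \<eta> k)
                 \<le> real n * \<psi> y + (norm (y - xi k (Suc n)))\<^sup>2 / (2 * \<eta> k))"
begin

definition objective :: "'a \<Rightarrow> real" where
  "objective y = (1 / real n) * (\<Sum>i=1..n. fs i y) + \<psi> y"

definition gain :: "nat \<Rightarrow> real" where
  "gain k = (\<Prod>l=2..k. 1 + real n * \<eta> (l - 1) * \<mu>)"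

definition gamma :: "nat \<Rightarrow> real" where
  "gamma k = \<eta> k * gain k"

lemma mu_nonneg: "\<mu> \<ge> 0"
  using psi_mu by (simp add: mu_condition_def)

lemma gain_ge_1: "k \<le> Suc K \<Longrightarrow> 1 \<le> gain k"
  unfolding gain_def
proof (intro prod_ge_1)
  fix l assume "k \<le> Suc K" "l \<in> {2..k}"
  then have "l - 1 \<in> {1..K}"
    by auto
  then have "\<eta> (l - 1) > 0"
    by (rule eta_pos)
  then show "1 \<le> 1 + real n * \<eta> (l - 1) * \<mu>"
    using mu_nonneg by simp
qed

lemma gain_1 [simp]: "gain 1 = 1"
  by (simp add: gain_def)

lemma gain_Suc: "k \<ge> 1 \<Longrightarrow> gain (Suc k) = gain k * (1 + real n * \<eta> k * \<mu>)"
  unfolding gain_def by (simp add: prod.nat_ivl_Suc')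

lemma gamma_pos: "k \<in> {1..K} \<Longrightarrow> gamma k > 0"
  using eta_pos gain_ge_1[of k] by (simp add: gamma_def)

lemma x_in_dom: "j \<in> {1..Suc K} \<Longrightarrow> x j \<in> D"
proof (cases "j = 1")
  case False
  assume "j \<in> {1..Suc K}"
  with False have "j - 1 \<in> {1..K}" and "Suc (j - 1) = j"
    by auto
  then show ?thesis
    using prox by metis
qed (use x1 in simp)

lemma epoch_descent:
  assumes k: "k \<in> {1..K}" and y: "y \<in> D"
  shows "2 * real n * \<eta> k * (objective (x (Suc k)) - objective y)
    \<le> (norm (y - x k))\<^sup>2 - (1 + real n * \<eta> k * \<mu>) * (norm (y - x (Suc k)))\<^sup>2
      + 6 * (\<eta> k)\<^sup>2 * (\<Sum>i=1..n. G i)\<^sup>2"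
proof -
  define p where "p = x (Suc k)"
  define c where "c = xi k (Suc n)"
  define r where "r = norm (p - x k)"
  define Gs where "Gs = (\<Sum>i=1..n. G i)"
  have \<sigma>: "\<sigma> k i \<in> {1..n}" if "i \<in> {1..n}" for i
    using permutes_in_image[OF perm[OF k]] that by blast
  have reindex: "(\<Sum>i=1..n. h (\<sigma> k i)) = (\<Sum>i=1..n. h i)" for h :: "nat \<Rightarrow> real"
    using sum.permute[OF perm[OF k], of h] by simp
  have "inner (xi k 1 - xi k (Suc n)) (y - p) - 2 * \<eta> k * norm (p - xi k 1) * (\<Sum>i=1..n. G (\<sigma> k i))
        - (\<eta> k)\<^sup>2 * (\<Sum>i=1..n. G (\<sigma> k i))\<^sup>2
      \<le> \<eta> k * (\<Sum>i=1..n. fs (\<sigma> k i) y - fs (\<sigma> k i) p)"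
    using g_subgrad[OF \<sigma>] lipschitz[OF \<sigma> g_subgrad[OF \<sigma>]] eta_pos[OF k] inner_step[OF k]
    by (intro incremental_subgradient_pass) (auto simp: less_imp_le)
  then have "inner (x k - c) (y - p) - 2 * \<eta> k * r * Gs - (\<eta> k)\<^sup>2 * Gs\<^sup>2
      \<le> \<eta> k * (\<Sum>i=1..n. fs (\<sigma> k i) y - fs (\<sigma> k i) p)"
    unfolding inner_start[OF k] reindex[of G] c_def r_def Gs_def .
  also have "\<dots> = \<eta> k * ((\<Sum>i=1..n. fs i y) - (\<Sum>i=1..n. fs i p))"
    using reindex[of "\<lambda>i. fs i y"] reindex[of "\<lambda>i. fs i p"] by (simp add: sum_subtractf)
  finally have f_part: "inner (x k - c) (y - p) - 2 * \<eta> k * r * Gs - (\<eta> k)\<^sup>2 * Gs\<^sup>2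
      \<le> \<eta> k * ((\<Sum>i=1..n. fs i y) - (\<Sum>i=1..n. fs i p))" .
  have \<psi>_part: "inner (c - p) (y - p) + real n * \<eta> k * \<mu> / 2 * (norm (y - p))\<^sup>2
      \<le> real n * \<eta> k * (\<psi> y - \<psi> p)"
    using prox_step_lower_bound[of "real n" "\<eta> k" D \<psi> \<mu> p y c] psi_pcc psi_mu n_pos eta_pos[OF k]
      prox[OF k] y
    by (simp add: proper_closed_convex_def p_def c_def)
  have "2 * inner (x k - p) (y - p) = r\<^sup>2 + (norm (y - p))\<^sup>2 - (norm (y - x k))\<^sup>2"
    unfolding r_def power2_norm_eq_inner
    by (simp add: inner_diff_left inner_diff_right inner_commute)
  \<comment> \<open>absorbs the drift term 4 \<eta> r Gs into - r^2, which is where the constant 6 = 2 + 4 comes from\<close>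
  moreover have "0 \<le> (r - 2 * \<eta> k * Gs)\<^sup>2"
    by simp
  moreover have "inner (x k - c) (y - p) + inner (c - p) (y - p) = inner (x k - p) (y - p)"
    by (simp add: inner_diff_left)
  moreover have "2 * real n * \<eta> k * (objective p - objective y)
      = - 2 * (\<eta> k * ((\<Sum>i=1..n. fs i y) - (\<Sum>i=1..n. fs i p))) - 2 * (real n * \<eta> k * (\<psi> y - \<psi> p))"
    using n_pos by (simp add: objective_def field_simps)
  ultimately show ?thesis
    using f_part \<psi>_part unfolding p_def[symmetric] Gs_def[symmetric]
    by (simp add: power2_eq_square algebra_simps)
qed

lemma weighted_epoch_descent:
  assumes k: "k \<in> {1..K}" and y: "y \<in> D"
  shows "2 * real n * gamma k * (objective (x (Suc k)) - objective y)
    \<le> gain k * (norm (y - x k))\<^sup>2 - gain (Suc k) * (norm (y - x (Suc k)))\<^sup>2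
      + 6 * (\<Sum>i=1..n. G i)\<^sup>2 * gamma k * \<eta> k"
proof -
  have "gain k * (2 * real n * \<eta> k * (objective (x (Suc k)) - objective y))
    \<le> gain k * ((norm (y - x k))\<^sup>2 - (1 + real n * \<eta> k * \<mu>) * (norm (y - x (Suc k)))\<^sup>2
      + 6 * (\<eta> k)\<^sup>2 * (\<Sum>i=1..n. G i)\<^sup>2)"
    using epoch_descent[OF k y] gain_ge_1[of k] k by (intro mult_left_mono) auto
  then show ?thesis
    using gain_Suc[of k] k by (simp add: gamma_def algebra_simps power2_eq_square)
qed

theorem last_iterate_bound:
  assumes K: "K \<ge> 1" and xs: "xs \<in> D"
  shows "objective (x (Suc K)) - objective xs \<le>
      ((norm (xs - x 1))\<^sup>2 - (norm (xs - x (Suc K)))\<^sup>2) / (2 * real n * (\<Sum>k=1..K. gamma k))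
      + 3 * ((\<Sum>i=1..n. G i) / real n)\<^sup>2 * real n * (\<Sum>k=1..K. gamma k * \<eta> k / (\<Sum>l=k..K. gamma l))"
proof -
  define Gs where "Gs = (\<Sum>i=1..n. G i)"
  \<comment> \<open>anchor 0 is the comparison point, anchor j \<ge> 1 the iterate x j\<close>
  define a where "a j = (if j = 0 then xs else x j)" for j
  define S where "S = (\<Sum>k=1..K. gamma k)"
  define T where "T = (\<Sum>k=1..K. gamma k * \<eta> k / (\<Sum>l=k..K. gamma l))"
  define A where "A = (norm (xs - x 1))\<^sup>2 - (norm (xs - x (Suc K)))\<^sup>2"
  have S_pos: "S > 0"
    unfolding S_def using gamma_pos K by (intro sum_pos) auto
  have "2 * real n * (objective (x (Suc K)) - objective xs)
      \<le> (gain 1 * (norm (xs - x 1))\<^sup>2 - gain (Suc K) * (norm (xs - x (Suc K)))\<^sup>2) / S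
        + (\<Sum>k=1..K. 6 * Gs\<^sup>2 * gamma k * \<eta> k / (\<Sum>l=k..K. gamma l))"
    using weighted_last_iterate_bound[where K = K and \<gamma> = gamma and \<Delta> = "\<lambda>j. objective (a j) - objective xs"
        and d = "\<lambda>j k. gain k * (norm (a j - x k))\<^sup>2" and C = "\<lambda>k. 6 * Gs\<^sup>2 * gamma k * \<eta> k"
        and c = "2 * real n" and s = 1 and j = 0]
      gamma_pos weighted_epoch_descent x_in_dom xs K gain_ge_1[of "Suc K"]
    by (simp add: a_def S_def Gs_def)
  also have "\<dots> \<le> A / S + 6 * Gs\<^sup>2 * T"
  proof -
    have "(norm (xs - x (Suc K)))\<^sup>2 \<le> gain (Suc K) * (norm (xs - x (Suc K)))\<^sup>2"
      using gain_ge_1[of "Suc K"] by (simp add: mult_le_cancel_right1)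
    then show ?thesis
      unfolding gain_1 A_def T_def using S_pos
      by (simp add: divide_right_mono sum_distrib_left mult.assoc)
  qed
  finally have "objective (x (Suc K)) - objective xs \<le> (A / S + 6 * Gs\<^sup>2 * T) / (2 * real n)"
    using n_pos by (simp add: pos_le_divide_eq mult.commute)
  also have "\<dots> = A / (2 * real n * S) + 3 * (Gs / real n)\<^sup>2 * real n * T"
    using n_pos S_pos by (simp add: field_simps power2_eq_square)
  finally show ?thesis
    by (simp add: A_def S_def T_def Gs_def)
qed

end

theorem mainTheorem11:
  fixes n K :: nat
    and fs :: "nat \<Rightarrow> 'a::euclidean_space \<Rightarrow> real"
    and g :: "nat \<Rightarrow> 'a \<Rightarrow> 'a"
    and G :: "nat \<Rightarrow> real"
    and \<psi> :: "'a \<Rightarrow> real" and D :: "'a set" and \<mu> :: real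
    and \<eta> :: "nat \<Rightarrow> real" and \<sigma> :: "nat \<Rightarrow> nat \<Rightarrow> nat"
    and x :: "nat \<Rightarrow> 'a" and xi :: "nat \<Rightarrow> nat \<Rightarrow> 'a" and xs :: 'a
  assumes n_pos: "n \<ge> 1"
    and K_ge: "K \<ge> 2"
    and f_convex: "\<And>i. i \<in> {1..n} \<Longrightarrow> convex_on UNIV (fs i)"
    and g_subgrad: "\<And>i y. i \<in> {1..n} \<Longrightarrow> is_subgrad UNIV (fs i) y (g i y)"
    and G_pos: "\<And>i. i \<in> {1..n} \<Longrightarrow> G i > 0"
    and lipschitz: "\<And>i y v. i \<in> {1..n} \<Longrightarrow> is_subgrad UNIV (fs i) y v \<Longrightarrow> norm v \<le> G i"
    and psi_pcc: "proper_closed_convex D \<psi>"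
    and psi_mu: "mu_condition D \<psi> \<mu>"
    and xs_min: "xs \<in> D"
      "\<And>y. y \<in> D \<Longrightarrow>
         (1 / real n) * (\<Sum>i=1..n. fs i xs) + \<psi> xs \<le> (1 / real n) * (\<Sum>i=1..n. fs i y) + \<psi> y"
    and x1: "x 1 \<in> D"
    and eta_pos: "\<And>k. k \<in> {1..K} \<Longrightarrow> \<eta> k > 0"
    and perm: "\<And>k. k \<in> {1..K} \<Longrightarrow> \<sigma> k permutes {1..n}"
    and inner_start: "\<And>k. k \<in> {1..K} \<Longrightarrow> xi k 1 = x k"
    and inner_step: "\<And>k i. k \<in> {1..K} \<Longrightarrow> i \<in> {1..n} \<Longrightarrow>
         xi k (Suc i) = xi k i - \<eta> k *\<^sub>R g (\<sigma> k i) (xi k i)"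
    and prox: "\<And>k. k \<in> {1..K} \<Longrightarrow> x (Suc k) \<in> D \<and>
         (\<forall>y\<in>D. real n * \<psi> (x (Suc k)) + (norm (x (Suc k) - xi k (Suc n)))\<^sup>2 / (2 * \<eta> k)
                 \<le> real n * \<psi> y + (norm (y - xi k (Suc n)))\<^sup>2 / (2 * \<eta> k))"
  shows "let F = (\<lambda>y. (1 / real n) * (\<Sum>i=1..n. fs i y) + \<psi> y);
             \<gamma> = (\<lambda>k. \<eta> k * (\<Prod>l=2..k. 1 + real n * \<eta> (l - 1) * \<mu>));
             Gbar = (\<Sum>i=1..n. G i) / real n
         in F (x (Suc K)) - F xs \<le>
            ((norm (xs - x 1))\<^sup>2 - (norm (xs - x (Suc K)))\<^sup>2) / (2 * real n * (\<Sum>k=1..K. \<gamma> k))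
            + 3 * Gbar\<^sup>2 * real n * (\<Sum>k=1..K. \<gamma> k * \<eta> k / (\<Sum>l=k..K. \<gamma> l))"
proof -
  interpret prox_shuffling n K fs g G \<psi> D \<mu> \<eta> \<sigma> x xi
    by unfold_locales (fact n_pos g_subgrad lipschitz psi_pcc psi_mu x1 eta_pos perm inner_start
        inner_step prox)+
  show ?thesis
    using last_iterate_bound[OF _ xs_min(1)] K_ge
    unfolding Let_def objective_def gamma_def gain_def by simp
qed

end
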